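(* In $\varepsilon\tau(\mathbf{C})$, for every derivation $\pi$ and every critical formula $C(e)$ used in $\pi$ with critical term $e$, there is an $e$-elimination set for $\pi$ and $\{C(e)\}$.
   Context: $\mathbf{C}$ is classical propositional logic. $\varepsilon\tau$-terms: $\varepsilon x\,A(x)$, $\tau x\,A(x)$. Critical formulas: $A(t)\to A(\varepsilon x\,A(x))$ (critical term $\varepsilon x\,A(x)$) and $A(\tau x\,A(x))\to A(t)$ (critical term $\tau x\,A(x)$); a critical formula belongs to its critical term. A derivation $\pi$ of $D$ in $\varepsilon\tau(\mathbf{L})$ is a derivation in the quantifier-free language with $\varepsilon\tau$-terms from a finite set of critical formulas using substitution instances of theorems of $\mathbf{L}$ and modus ponens. Suppose the critical formulas of $\pi$ are $\Gamma\cup\Lambda(e)\cup\Lambda'(e)$, where $\Lambda(e)\cup\Lambda'(e)$ are all the critical formulas of $\pi$ belonging to $e$ and $\Gamma$ the rest, and write the end formula as $D(e)$. A set $\{s_1,\dots,s_k\}$ of terms is an $e$-elimination set for $\pi$ and $\Lambda(e)$ if $\Gamma[s_1/e],\dots,\Gamma[s_k/e],\Lambda'(e)\vdash_{\mathbf{L}}D(s_1)\lor\dots\lor D(s_k)$, where $[s/e]$ and $D(s)$ denote replacing every occurrence of $e$ by $s$, and $\vdash_{\mathbf{L}}$ is derivability from the listed assumptions by substitution instances of theorems of $\mathbf{L}$ and modus ponens. *)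

theory Defs
  imports Main
begin

text \<open>Free variables are named by naturals; bound variables are de Bruijn
indices; Eps A and Tau A bind index 0 in their body A.\<close>

datatype trm = Free nat | Bound nat | Fn nat "trm list" | Eps frm | Tau frm
and frm = Atom nat "trm list" | Bot | Neg frm | Conj frm frm | Disj frm frm | Imp frm frm

text \<open>Instantiation of bound index k by a term u: A(u) is open_f 0 u A.\<close>
primrec open_t :: "nat \<Rightarrow> trm \<Rightarrow> trm \<Rightarrow> trm"
  and open_f :: "nat \<Rightarrow> trm \<Rightarrow> frm \<Rightarrow> frm" where
  "open_t k u (Free x) = Free x"
| "open_t k u (Bound i) = (if i = k then u else Bound i)"
| "open_t k u (Fn f ts) = Fn f (map (open_t k u) ts)"
| "open_t k u (Eps A) = Eps (open_f (Suc k) u A)"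
| "open_t k u (Tau A) = Tau (open_f (Suc k) u A)"
| "open_f k u (Atom p ts) = Atom p (map (open_t k u) ts)"
| "open_f k u Bot = Bot"
| "open_f k u (Neg A) = Neg (open_f k u A)"
| "open_f k u (Conj A B) = Conj (open_f k u A) (open_f k u B)"
| "open_f k u (Disj A B) = Disj (open_f k u A) (open_f k u B)"
| "open_f k u (Imp A B) = Imp (open_f k u A) (open_f k u B)"

primrec closed_t :: "nat \<Rightarrow> trm \<Rightarrow> bool"
  and closed_f :: "nat \<Rightarrow> frm \<Rightarrow> bool" where
  "closed_t k (Free x) = True"
| "closed_t k (Bound i) = (i < k)"
| "closed_t k (Fn f ts) = list_all (closed_t k) ts"
| "closed_t k (Eps A) = closed_f (Suc k) A"
| "closed_t k (Tau A) = closed_f (Suc k) A"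
| "closed_f k (Atom p ts) = list_all (closed_t k) ts"
| "closed_f k Bot = True"
| "closed_f k (Neg A) = closed_f k A"
| "closed_f k (Conj A B) = (closed_f k A \<and> closed_f k B)"
| "closed_f k (Disj A B) = (closed_f k A \<and> closed_f k B)"
| "closed_f k (Imp A B) = (closed_f k A \<and> closed_f k B)"

abbreviation lc_t :: "trm \<Rightarrow> bool" where "lc_t \<equiv> closed_t 0"
abbreviation lc_f :: "frm \<Rightarrow> bool" where "lc_f \<equiv> closed_f 0"

primrec repl_t :: "trm \<Rightarrow> trm \<Rightarrow> trm \<Rightarrow> trm"
  and repl_f :: "trm \<Rightarrow> trm \<Rightarrow> frm \<Rightarrow> frm" where
  "repl_t e s (Free x) = (if Free x = e then s else Free x)"
| "repl_t e s (Bound i) = (if Bound i = e then s else Bound i)"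
| "repl_t e s (Fn f ts) = (if Fn f ts = e then s else Fn f (map (repl_t e s) ts))"
| "repl_t e s (Eps A) = (if Eps A = e then s else Eps (repl_f e s A))"
| "repl_t e s (Tau A) = (if Tau A = e then s else Tau (repl_f e s A))"
| "repl_f e s (Atom p ts) = Atom p (map (repl_t e s) ts)"
| "repl_f e s Bot = Bot"
| "repl_f e s (Neg A) = Neg (repl_f e s A)"
| "repl_f e s (Conj A B) = Conj (repl_f e s A) (repl_f e s B)"
| "repl_f e s (Disj A B) = Disj (repl_f e s A) (repl_f e s B)"
| "repl_f e s (Imp A B) = Imp (repl_f e s A) (repl_f e s B)"

datatype pform = PVar nat | PBot | PNeg pform | PConj pform pform
  | PDisj pform pform | PImp pform pform

primrec peval :: "(nat \<Rightarrow> bool) \<Rightarrow> pform \<Rightarrow> bool" where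
  "peval v (PVar n) = v n"
| "peval v PBot = False"
| "peval v (PNeg P) = (\<not> peval v P)"
| "peval v (PConj P Q) = (peval v P \<and> peval v Q)"
| "peval v (PDisj P Q) = (peval v P \<or> peval v Q)"
| "peval v (PImp P Q) = (peval v P \<longrightarrow> peval v Q)"

definition theorem_C :: "pform \<Rightarrow> bool" where
  "theorem_C P \<longleftrightarrow> (\<forall>v. peval v P)"

primrec psubst :: "(nat \<Rightarrow> frm) \<Rightarrow> pform \<Rightarrow> frm" where
  "psubst \<sigma> (PVar n) = \<sigma> n"
| "psubst \<sigma> PBot = Bot"
| "psubst \<sigma> (PNeg P) = Neg (psubst \<sigma> P)"
| "psubst \<sigma> (PConj P Q) = Conj (psubst \<sigma> P) (psubst \<sigma> Q)"
| "psubst \<sigma> (PDisj P Q) = Disj (psubst \<sigma> P) (psubst \<sigma> Q)"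
| "psubst \<sigma> (PImp P Q) = Imp (psubst \<sigma> P) (psubst \<sigma> Q)"

definition inst_C :: "frm \<Rightarrow> bool" where
  "inst_C A \<longleftrightarrow> lc_f A \<and> (\<exists>P \<sigma>. theorem_C P \<and> A = psubst \<sigma> P)"

inductive derivC :: "frm set \<Rightarrow> frm \<Rightarrow> bool" where
  hyp: "A \<in> \<Gamma> \<Longrightarrow> derivC \<Gamma> A"
| ax: "inst_C A \<Longrightarrow> derivC \<Gamma> A"
| mp: "derivC \<Gamma> A \<Longrightarrow> derivC \<Gamma> (Imp A B) \<Longrightarrow> derivC \<Gamma> B"

text \<open>EpsCrit A t stands for A(t) \<longrightarrow> A(eps x A(x)); TauCrit A t for
A(tau x A(x)) \<longrightarrow> A(t). A is a body with bound index 0 for x.\<close>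
datatype crit = EpsCrit frm trm | TauCrit frm trm

primrec crit_term :: "crit \<Rightarrow> trm" where
  "crit_term (EpsCrit A t) = Eps A"
| "crit_term (TauCrit A t) = Tau A"

primrec crit_fml :: "crit \<Rightarrow> frm" where
  "crit_fml (EpsCrit A t) = Imp (open_f 0 t A) (open_f 0 (Eps A) A)"
| "crit_fml (TauCrit A t) = Imp (open_f 0 (Tau A) A) (open_f 0 t A)"

primrec wf_crit :: "crit \<Rightarrow> bool" where
  "wf_crit (EpsCrit A t) = (closed_f 1 A \<and> lc_t t)"
| "wf_crit (TauCrit A t) = (closed_f 1 A \<and> lc_t t)"

text \<open>A derivation pi of D is represented by its finite set Cs of critical
formulas together with the end formula D derivable from them.\<close>
definition is_derivation :: "crit set \<Rightarrow> frm \<Rightarrow> bool" where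
  "is_derivation Cs D \<longleftrightarrow> finite Cs \<and> (\<forall>c\<in>Cs. wf_crit c) \<and> lc_f D
     \<and> derivC (crit_fml ` Cs) D"

fun disjs :: "frm list \<Rightarrow> frm" where
  "disjs [] = Bot"
| "disjs [A] = A"
| "disjs (A # As) = Disj A (disjs As)"

text \<open>ss is an e-elimination set for the derivation (Cs, D) and Lam \<subseteq> crits of e:
Gamma = crits of Cs not belonging to e, Lam' = crits belonging to e not in Lam.\<close>
definition elim_set :: "trm \<Rightarrow> trm list \<Rightarrow> crit set \<Rightarrow> frm \<Rightarrow> crit set \<Rightarrow> bool" where
  "elim_set e ss Cs D Lam \<longleftrightarrow> ss \<noteq> [] \<and> list_all lc_t ss \<and>
     derivC ((\<Union>s\<in>set ss. repl_f e s ` crit_fml ` {c\<in>Cs. crit_term c \<noteq> e})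
             \<union> crit_fml ` ({c\<in>Cs. crit_term c = e} - Lam))
            (disjs (map (\<lambda>s. repl_f e s D) ss))"

end

theory Submission
  imports Defs "HOL-Library.Countable"
begin

text \<open>Let \<open>e\<close> be the critical term of \<open>C(e)\<close> and \<open>t\<close> the term it is instantiated with;
then \<open>{e, t}\<close> is an elimination set. Derivability from finitely many hypotheses coincides
with propositional entailment, atoms acting as variables. A valuation making \<open>C(e)\<close> true
makes every critical formula of the derivation true (those of \<open>e\<close> other than \<open>C(e)\<close> are
hypotheses), hence \<open>D(e)\<close>. If it makes \<open>C(e)\<close> false, precompose it with the replacement
of \<open>e\<close> by \<open>t\<close>. As \<open>e\<close> does not occur in its own body \<open>A\<close>, the critical formulas of \<open>e\<close>
become \<open>A(t') \<longrightarrow> A(t)\<close> resp. \<open>A(t) \<longrightarrow> A(t')\<close>, which hold since \<open>A(t)\<close> is true resp.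
false; the other critical formulas become the hypotheses \<open>\<Gamma>[t/e]\<close>. Hence \<open>D(t)\<close>.\<close>

lemma closed_mono:
  fixes x :: trm and A :: frm
  shows "closed_t k x \<Longrightarrow> k \<le> m \<Longrightarrow> closed_t m x"
    and "closed_f k A \<Longrightarrow> k \<le> m \<Longrightarrow> closed_f m A"
  by (induct x and A arbitrary: k m and k m) (auto simp: list_all_iff)

lemma closed_open:
  fixes x :: trm and A :: frm
  shows "closed_t (Suc k) x \<Longrightarrow> closed_t k u \<Longrightarrow> closed_t k (open_t k u x)"
    and "closed_f (Suc k) A \<Longrightarrow> closed_t k u \<Longrightarrow> closed_f k (open_f k u A)"
  by (induct x and A arbitrary: k and k) (auto simp: list_all_iff intro: closed_mono[OF _ le_SucI])

lemma closed_repl: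
  fixes x :: trm and A :: frm
  shows "closed_t k x \<Longrightarrow> lc_t s \<Longrightarrow> closed_t k (repl_t e s x)"
    and "closed_f k A \<Longrightarrow> lc_t s \<Longrightarrow> closed_f k (repl_f e s A)"
  by (induct x and A arbitrary: k and k) (auto simp: list_all_iff intro: closed_mono)

lemma repl_same:
  fixes x :: trm and A :: frm
  shows "repl_t e e x = x" and "repl_f e e A = A"
  by (induct x and A) (auto intro: map_idI)

lemma map_eq_or_size_list_ge:
  assumes "\<forall>y\<in>set ys. f y = y \<or> n \<le> size (f y)"
  shows "map f ys = ys \<or> n \<le> size_list (size \<circ> f) ys"
  using assms by (induct ys) (auto simp: comp_def)

lemma open_eq_or_size_ge:
  fixes x :: trm and A :: frm
  shows "open_t k u x = x \<or> size u \<le> size (open_t k u x)"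
    and "open_f k u A = A \<or> size u \<le> size (open_f k u A)"
proof (induct x and A arbitrary: k and k)
  case (Fn f ts)
  then have "\<forall>y\<in>set ts. open_t k u y = y \<or> size u \<le> size (open_t k u y)" by blast
  then show ?case using map_eq_or_size_list_ge by fastforce
next
  case (Atom p ts)
  then have "\<forall>y\<in>set ts. open_t k u y = y \<or> size u \<le> size (open_t k u y)" by blast
  then show ?case using map_eq_or_size_list_ge by fastforce
qed (auto intro: le_SucI trans_le_add1 trans_le_add2)

text \<open>The size bound ensures that opening with \<open>e\<close> creates occurrences of \<open>e\<close> only at the
bound index: a changed compound subterm is strictly larger than \<open>e\<close>.\<close>

lemma repl_open:
  fixes x :: trm and A :: frm
  shows "size x < size e \<Longrightarrow> repl_t e s (open_t k e x) = open_t k s x"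
    and "size A < size e \<Longrightarrow> repl_f e s (open_f k e A) = open_f k s A"
proof (induct x and A arbitrary: k and k)
  case (Fn f ts)
  have "map (open_t k e) ts = ts \<or> size e \<le> size_list (size \<circ> open_t k e) ts"
    using map_eq_or_size_list_ge open_eq_or_size_ge(1) by blast
  then have "Fn f (map (open_t k e) ts) \<noteq> e"
    using Fn.prems by (auto dest: arg_cong[of _ _ "size :: trm \<Rightarrow> nat"])
  moreover have "\<And>y. y \<in> set ts \<Longrightarrow> size y < size e"
    using Fn.prems size_list_estimation'[of _ ts _ size] by fastforce
  ultimately show ?case using Fn.hyps by simp
next
  case (Eps B)
  then show ?case using open_eq_or_size_ge(2)[of "Suc k" e B]
    by (auto dest: arg_cong[of _ _ "size :: trm \<Rightarrow> nat"])
next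
  case (Tau B)
  then show ?case using open_eq_or_size_ge(2)[of "Suc k" e B]
    by (auto dest: arg_cong[of _ _ "size :: trm \<Rightarrow> nat"])
next
  case (Atom p ts)
  then show ?case using size_list_estimation'[of _ ts _ size] by fastforce
next
  case (Bound i)
  then show ?case by (cases e) auto
qed auto

primrec feval :: "(frm \<Rightarrow> bool) \<Rightarrow> frm \<Rightarrow> bool" where
  "feval w (Atom p ts) = w (Atom p ts)"
| "feval w Bot = False"
| "feval w (Neg A) = (\<not> feval w A)"
| "feval w (Conj A B) = (feval w A \<and> feval w B)"
| "feval w (Disj A B) = (feval w A \<or> feval w B)"
| "feval w (Imp A B) = (feval w A \<longrightarrow> feval w B)"

lemma feval_psubst: "feval w (psubst \<sigma> P) = peval (\<lambda>n. feval w (\<sigma> n)) P"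
  by (induct P) auto

lemma derivC_sound: "derivC H A \<Longrightarrow> \<forall>h\<in>H. feval w h \<Longrightarrow> feval w A"
  by (induct rule: derivC.induct) (auto simp: inst_C_def theorem_C_def feval_psubst)

instance trm and frm :: countable
  by countable_datatype

primrec skeleton :: "frm \<Rightarrow> pform" where
  "skeleton (Atom p ts) = PVar (to_nat (Atom p ts))"
| "skeleton Bot = PBot"
| "skeleton (Neg A) = PNeg (skeleton A)"
| "skeleton (Conj A B) = PConj (skeleton A) (skeleton B)"
| "skeleton (Disj A B) = PDisj (skeleton A) (skeleton B)"
| "skeleton (Imp A B) = PImp (skeleton A) (skeleton B)"

lemma psubst_skeleton: "psubst from_nat (skeleton A) = A"
  by (induct A) auto

lemma peval_skeleton: "peval v (skeleton A) = feval (v \<circ> to_nat) A"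
  by (induct A) auto

lemma inst_C_if_valid:
  assumes "lc_f A" and "\<And>w. feval w A"
  shows "inst_C A"
proof -
  have "theorem_C (skeleton A)"
    using assms(2) by (simp add: theorem_C_def peval_skeleton)
  then show ?thesis
    using assms(1) psubst_skeleton unfolding inst_C_def by metis
qed

lemma feval_foldr_Imp: "feval w (foldr Imp hs A) = ((\<forall>h\<in>set hs. feval w h) \<longrightarrow> feval w A)"
  by (induct hs) auto

lemma closed_foldr_Imp: "\<forall>h\<in>set hs. lc_f h \<Longrightarrow> lc_f A \<Longrightarrow> lc_f (foldr Imp hs A)"
  by (induct hs) auto

lemma derivC_foldr_Imp_mp: "derivC H (foldr Imp hs A) \<Longrightarrow> set hs \<subseteq> H \<Longrightarrow> derivC H A"
  by (induct hs) (auto intro: derivC.mp[OF derivC.hyp])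

lemma derivC_complete:
  assumes "finite H" and "\<forall>h\<in>H. lc_f h" and "lc_f A"
    and "\<And>w. \<forall>h\<in>H. feval w h \<Longrightarrow> feval w A"
  shows "derivC H A"
proof -
  obtain hs where hs: "set hs = H"
    using assms(1) finite_list by blast
  have "inst_C (foldr Imp hs A)"
    using assms hs by (intro inst_C_if_valid) (auto simp: closed_foldr_Imp feval_foldr_Imp)
  then show ?thesis
    using derivC.ax derivC_foldr_Imp_mp hs by blast
qed

lemma feval_repl: "feval w (repl_f e s A) = feval (\<lambda>a. w (repl_f e s a)) A"
  by (induct A) auto

lemma closed_crit_fml: "wf_crit c \<Longrightarrow> lc_f (crit_fml c)"
  by (cases c) (auto intro!: closed_open(2))

primrec crit_witness :: "crit \<Rightarrow> trm" where
  "crit_witness (EpsCrit A t) = t"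
| "crit_witness (TauCrit A t) = t"

lemma closed_crit_term_witness:
  "wf_crit c \<Longrightarrow> lc_t (crit_term c) \<and> lc_t (crit_witness c)"
  by (cases c) auto

lemma feval_repl_crit_witness:
  assumes "\<not> feval w (crit_fml C)" and "crit_term c = crit_term C"
  shows "feval w (repl_f (crit_term C) (crit_witness C) (crit_fml c))"
proof (cases C)
  case (EpsCrit A t)
  then obtain t' where "c = EpsCrit A t'"
    using assms(2) by (cases c) auto
  moreover have "repl_f (Eps A) t (open_f 0 (Eps A) A) = open_f 0 t A"
    by (rule repl_open(2)) simp
  ultimately show ?thesis
    using assms(1) EpsCrit by simp
next
  case (TauCrit A t)
  then obtain t' where "c = TauCrit A t'"
    using assms(2) by (cases c) auto
  moreover have "repl_f (Tau A) t (open_f 0 (Tau A) A) = open_f 0 t A"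
    by (rule repl_open(2)) simp
  ultimately show ?thesis
    using assms(1) TauCrit by simp
qed

lemma elim_set_crit_witness:
  assumes "is_derivation Cs D" and "C \<in> Cs"
  shows "elim_set (crit_term C) [crit_term C, crit_witness C] Cs D {C}"
proof -
  define e s where "e = crit_term C" and "s = crit_witness C"
  define H where "H = (\<Union>s'\<in>set [e, s]. repl_f e s' ` crit_fml ` {c\<in>Cs. crit_term c \<noteq> e})
    \<union> crit_fml ` ({c\<in>Cs. crit_term c = e} - {C})"
  have fin: "finite Cs" and wf: "\<forall>c\<in>Cs. wf_crit c" and "lc_f D"
    and der: "derivC (crit_fml ` Cs) D"
    using assms(1) unfolding is_derivation_def by auto
  have lc: "lc_t e" "lc_t s"
    using wf assms(2) closed_crit_term_witness unfolding e_def s_def by auto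
  have "derivC H (Disj D (repl_f e s D))"
  proof (rule derivC_complete)
    show "finite H"
      unfolding H_def using fin by simp
    show "\<forall>h\<in>H. lc_f h" and "lc_f (Disj D (repl_f e s D))"
      unfolding H_def using wf lc \<open>lc_f D\<close> by (auto intro: closed_repl(2) closed_crit_fml)
    fix w assume w: "\<forall>h\<in>H. feval w h"
    show "feval w (Disj D (repl_f e s D))"
    proof (cases "feval w (crit_fml C)")
      case True
      then have "\<forall>c\<in>Cs. feval w (crit_fml c)"
        using w unfolding H_def by (simp add: repl_same) blast
      then show ?thesis
        using derivC_sound[OF der] by auto
    next
      case False
      have "feval w (repl_f e s (crit_fml c))" if "c \<in> Cs" for c
      proof (cases "crit_term c = e")
        case True
        then show ?thesis
          using feval_repl_crit_witness[OF False] unfolding e_def s_def by simp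
      next
        case False
        then show ?thesis
          using w that unfolding H_def by simp
      qed
      then show ?thesis
        using derivC_sound[OF der, of "\<lambda>a. w (repl_f e s a)"] by (auto simp: feval_repl)
    qed
  qed
  then show ?thesis
    unfolding elim_set_def H_def using lc by (simp add: repl_same e_def s_def)
qed

theorem mainTheorem13:
  assumes "is_derivation Cs D"
    and "C \<in> Cs"
  shows "\<exists>ss. elim_set (crit_term C) ss Cs D {C}"
  using elim_set_crit_witness[OF assms] by blast

end
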